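(* Let $G$ be a crown-free linear $3$-graph and let $e=\{x,y,z\} \in E(G)$ be an edge with $D(e) \geq \langle 5,5,4\rangle$. Let $$S = \bigcup_{f \in E(G),\ f \cap \{x,y,z\} \neq \emptyset} f$$ be the set of all vertices lying on an edge that meets $\{x,y,z\}$, and let $$E_S = \{f \in E(G) : f \cap S \neq \emptyset\}.$$ Then $|S| = 11$, every vertex in $S$ has degree at most $5$, $|E_S| \leq 13$, and every edge in $E_S$ is a subset of $S$. In other words, the subgraph $G[S]$ is a connected component of $G$.
   Context: A linear $3$-graph $G=(V,E)$ consists of a finite vertex set $V$ and a collection $E$ of $3$-element subsets of $V$ (edges) such that any two distinct edges share at most one vertex. The degree $d(v)$ of a vertex $v$ is the number of edges containing $v$. For an edge $e$ and positive integers $a \geq b \geq c$, write $D(e) \geq \langle a,b,c\rangle$ if one can write $e=\{u,v,w\}$ with $d(u)\geq a$, $d(v) \geq b$, $d(w) \geq c$. The crown $C_{13}$ is the linear $3$-graph on $9$ vertices $\{a,b,c,d,e,f,g,h,i\}$ with edges $\{a,b,c\},\{a,d,e\},\{b,f,g\},\{c,h,i\}$. A linear $3$-graph is crown-free if it contains no copy of $C_{13}$. *)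

theory Defs
  imports Main
begin

definition linear_3graph :: "'a set \<Rightarrow> 'a set set \<Rightarrow> bool" where
  "linear_3graph V E \<longleftrightarrow> finite V \<and> (\<forall>e\<in>E. e \<subseteq> V \<and> card e = 3) \<and>
     (\<forall>e\<in>E. \<forall>f\<in>E. e \<noteq> f \<longrightarrow> card (e \<inter> f) \<le> 1)"

definition degree :: "'a set set \<Rightarrow> 'a \<Rightarrow> nat" where
  "degree E v = card {f \<in> E. v \<in> f}"

definition D_ge :: "'a set set \<Rightarrow> 'a set \<Rightarrow> nat \<Rightarrow> nat \<Rightarrow> nat \<Rightarrow> bool" where
  "D_ge E e a b c \<longleftrightarrow> (\<exists>u v w. e = {u, v, w} \<and>
      degree E u \<ge> a \<and> degree E v \<ge> b \<and> degree E w \<ge> c)"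

definition contains_crown :: "'a set set \<Rightarrow> bool" where
  "contains_crown E \<longleftrightarrow> (\<exists>a b c d e f g h i.
      distinct [a, b, c, d, e, f, g, h, i] \<and>
      {a, b, c} \<in> E \<and> {a, d, e} \<in> E \<and> {b, f, g} \<in> E \<and> {c, h, i} \<in> E)"

definition crown_free :: "'a set set \<Rightarrow> bool" where
  "crown_free E \<longleftrightarrow> \<not> contains_crown E"

end

theory Submission
  imports Defs "HOL-Library.Disjoint_Sets"
begin

(* For a vertex v of e = {x, y, z}, call a pair a a petal of v if insert v a is an edge other
   than e. Linearity makes the petals of v a matching, no pair is a petal of two vertices of e,
   and crown-freeness says that no petal of x, petal of y and petal of z are pairwise disjoint.
   With at least 4, 4 and 3 petals, counting how the petals meet a fixed z-petal forces exactly
   four x-petals and four y-petals, arranged as two 2x2 grids {p,q},{r,s} / {p,r},{q,s} on eight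
   vertices W, with every z-petal a diagonal {p,s} or {q,r} of a grid. An edge through W that
   avoids e would complete a crown, so every edge meeting W meets e. Hence S consists of the 11
   vertices of e and W, the vertices of W have degree at most 3, and the edges meeting S are e
   together with at most 12 petal edges. *)

section \<open>Matchings of pairs\<close>

definition matching :: "'a set set \<Rightarrow> bool" where
  "matching A \<longleftrightarrow> disjoint A \<and> (\<forall>a\<in>A. card a = 2)"

lemma matching_card: "matching A \<Longrightarrow> a \<in> A \<Longrightarrow> card a = 2"
  by (simp add: matching_def)

lemma matching_disjoint: "matching A \<Longrightarrow> a \<in> A \<Longrightarrow> a' \<in> A \<Longrightarrow> a \<noteq> a' \<Longrightarrow> a \<inter> a' = {}"
  by (simp add: matching_def disjoint_def)

lemma matching_subset: "matching A \<Longrightarrow> A' \<subseteq> A \<Longrightarrow> matching A'"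
  by (auto simp: matching_def disjoint_def)

lemma eq_doubleton_if_card_2:
  assumes "card c = 2" "u \<in> c" "v \<in> c" "u \<noteq> v"
  shows "c = {u, v}"
  using assms by (auto simp: card_2_iff)

lemma card_2_obtain:
  assumes "card c = 2" "u \<in> c"
  obtains v where "c = {u, v}" "u \<noteq> v"
  using assms by (auto simp: card_2_iff)

lemma card_le_card_if_disjoint_meets:
  assumes "finite c" "disjoint A" "\<And>a. a \<in> A \<Longrightarrow> a \<inter> c \<noteq> {}"
  shows "card A \<le> card c"
  using assms unfolding disjoint_def
  by (intro card_le_if_inj_on_rel[where r = "\<lambda>a u. u \<in> a"]) blast+

lemma subset_Un_if_meets_both:
  assumes "card c = 2" "c \<inter> a \<noteq> {}" "c \<inter> a' \<noteq> {}" "a \<inter> a' = {}"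
  shows "c \<subseteq> a \<union> a'"
  using assms by (auto simp: card_2_iff)

lemma meets_both_if_subset_Un:
  assumes "card c = 2" "card a = 2" "card a' = 2" "c \<subseteq> a \<union> a'" "c \<noteq> a" "c \<noteq> a'"
  shows "c \<inter> a \<noteq> {}" "c \<inter> a' \<noteq> {}"
proof -
  have "c \<subseteq> b \<Longrightarrow> c = b" if "card b = 2" for b
    using card_seteq[of b c] that assms(1) by (simp add: card_ge_0_finite)
  then show "c \<inter> a \<noteq> {}" "c \<inter> a' \<noteq> {}"
    using assms by blast+
qed

lemma two_by_two_grid:
  assumes "matching {a1, a2}" "matching {b1, b2}" "a1 \<noteq> a2" "b1 \<noteq> b2"
    and "a1 \<inter> b1 \<noteq> {}" "a1 \<inter> b2 \<noteq> {}" "a2 \<inter> b1 \<noteq> {}" "a2 \<inter> b2 \<noteq> {}"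
  obtains p q r s where "distinct [p, q, r, s]"
    "a1 = {p, q}" "a2 = {r, s}" "b1 = {p, r}" "b2 = {q, s}"
proof -
  have card: "card a1 = 2" "card a2 = 2" "card b1 = 2" "card b2 = 2"
    and disj: "a1 \<inter> a2 = {}" "b1 \<inter> b2 = {}"
    using assms(1-4) by (auto simp: matching_def disjoint_def)
  obtain p r where p: "p \<in> a1" "p \<in> b1" and r: "r \<in> a2" "r \<in> b1"
    using assms(5,7) by blast
  obtain q where q: "a1 = {p, q}" "p \<noteq> q"
    using card_2_obtain[OF card(1) p(1)] .
  obtain s where s: "a2 = {r, s}" "r \<noteq> s"
    using card_2_obtain[OF card(2) r(1)] .
  have "p \<noteq> r"
    using p r disj(1) by blast
  then have b1: "b1 = {p, r}"
    using card(3) p r by (intro eq_doubleton_if_card_2)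
  have "b2 \<subseteq> a1 \<union> a2"
    using subset_Un_if_meets_both[OF card(4)] assms(6,8) disj(1) by (simp add: Int_commute)
  then have "b2 \<subseteq> {q, s}"
    using disj(2) b1 q(1) s(1) by blast
  then have b2: "b2 = {q, s}"
    using card(4) card_seteq[of "{q, s}" b2] by (simp add: card_insert_if)
  show ?thesis
    using that[OF _ q(1) s(1) b1 b2] q s disj(1) \<open>p \<noteq> r\<close> by auto
qed

lemma card_Collect_partition:
  assumes "finite M"
  shows "card M = card {a \<in> M. P a} + card {a \<in> M. \<not> P a}"
proof -
  have "card M = card ({a \<in> M. P a} \<union> {a \<in> M. \<not> P a})"
    by (rule arg_cong[where f = card]) blast
  also have "\<dots> = card {a \<in> M. P a} + card {a \<in> M. \<not> P a}"
    using assms by (intro card_Un_disjoint) auto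
  finally show ?thesis .
qed

lemma matching_split_by_pair:
  assumes "matching A" "matching B" "4 \<le> card A" "4 \<le> card B" "card c = 2"
    and "\<And>a b. a \<in> A \<Longrightarrow> b \<in> B \<Longrightarrow> a \<inter> c = {} \<Longrightarrow> b \<inter> c = {} \<Longrightarrow> a \<inter> b \<noteq> {}"
  shows "card {a \<in> A. a \<inter> c = {}} = 2" "card {a \<in> A. a \<inter> c \<noteq> {}} = 2"
proof -
  have few_meet: "card {a \<in> M. a \<inter> c \<noteq> {}} \<le> 2" if "matching M" for M
  proof -
    have "card {a \<in> M. a \<inter> c \<noteq> {}} \<le> card c"
    proof (rule card_le_card_if_disjoint_meets)
      show "finite c"
        using assms(5) by (simp add: card_ge_0_finite)
      show "disjoint {a \<in> M. a \<inter> c \<noteq> {}}"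
        using that by (auto simp: matching_def disjoint_def)
    qed auto
    then show ?thesis
      using assms(5) by simp
  qed
  have split: "card M = card {a \<in> M. a \<inter> c = {}} + card {a \<in> M. a \<inter> c \<noteq> {}}" if "4 \<le> card M" for M
    using that card_ge_0_finite[of M] by (intro card_Collect_partition) simp
  have "2 \<le> card {b \<in> B. b \<inter> c = {}}"
    using split[OF assms(4)] few_meet[OF assms(2)] assms(4) by linarith
  then obtain b where b: "b \<in> B" "b \<inter> c = {}"
    by (metis (mono_tags, lifting) Collect_empty_eq card.empty le_zero_eq zero_neq_numeral)
  have "card b = 2"
    using assms(2) b(1) by (simp add: matching_def)
  moreover have "card {a \<in> A. a \<inter> c = {}} \<le> card b"
  proof (rule card_le_card_if_disjoint_meets)
    show "finite b"
      using \<open>card b = 2\<close> by (simp add: card_ge_0_finite)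
    show "disjoint {a \<in> A. a \<inter> c = {}}"
      using assms(1) by (auto simp: matching_def disjoint_def)
    show "a \<inter> b \<noteq> {}" if "a \<in> {a \<in> A. a \<inter> c = {}}" for a
      using assms(6) b that by blast
  qed
  ultimately show "card {a \<in> A. a \<inter> c = {}} = 2" "card {a \<in> A. a \<inter> c \<noteq> {}} = 2"
    using split[OF assms(3)] few_meet[OF assms(1)] assms(3) by linarith+
qed

(* A, B and C model the petal families of x, y and z: the families share no pair by linearity,
   and rainbow-freeness is crown-freeness. *)
locale rainbow_free_matchings =
  fixes A B C :: "'a set set"
  assumes matching: "matching A" "matching B" "matching C"
    and disjoint_families: "A \<inter> B = {}" "A \<inter> C = {}" "B \<inter> C = {}"
    and card_lower: "4 \<le> card A" "4 \<le> card B" "3 \<le> card C"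
    and rainbow_free: "\<And>a b c. a \<in> A \<Longrightarrow> b \<in> B \<Longrightarrow> c \<in> C \<Longrightarrow>
      a \<inter> b = {} \<Longrightarrow> a \<inter> c = {} \<Longrightarrow> b \<inter> c = {} \<Longrightarrow> False"
begin

lemma swap: "rainbow_free_matchings B A C"
  using matching disjoint_families card_lower rainbow_free by unfold_locales blast+

lemma card_avoiding_meeting:
  assumes "c \<in> C"
  shows "card {a \<in> A. a \<inter> c = {}} = 2" "card {a \<in> A. a \<inter> c \<noteq> {}} = 2"
  using matching_split_by_pair[OF matching(1,2) card_lower(1,2) matching_card[OF matching(3) assms]]
    rainbow_free[OF _ _ assms] by blast+

lemma subset_Union_avoiding:
  assumes "c \<in> C" "b \<in> B" "b \<inter> c = {}"
  shows "b \<subseteq> \<Union>{a \<in> A. a \<inter> c = {}}"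
proof -
  obtain a a' where aa': "{a \<in> A. a \<inter> c = {}} = {a, a'}" "a \<noteq> a'"
    using card_avoiding_meeting(1)[OF assms(1)] by (meson card_2_iff)
  have "a \<in> {a \<in> A. a \<inter> c = {}}" "a' \<in> {a \<in> A. a \<inter> c = {}}"
    unfolding aa'(1) by simp_all
  then have a: "a \<in> A" "a' \<in> A" "a \<inter> c = {}" "a' \<inter> c = {}"
    by simp_all
  have "b \<subseteq> a \<union> a'"
  proof (rule subset_Un_if_meets_both)
    show "card b = 2"
      using matching_card[OF matching(2) assms(2)] .
    show "b \<inter> a \<noteq> {}" "b \<inter> a' \<noteq> {}"
      using rainbow_free[OF _ assms(2,1) _ _ assms(3)] a by (auto simp: Int_commute)
    show "a \<inter> a' = {}"
      using matching_disjoint[OF matching(1) a(1,2) aa'(2)] .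
  qed
  then show ?thesis
    unfolding aa'(1) by simp
qed

lemma B_subset_Union_A:
  assumes "b \<in> B"
  shows "b \<subseteq> \<Union>A"
proof -
  have card_b: "card b = 2"
    using matching_card[OF matching(2) assms] .
  have "card {c \<in> C. c \<inter> b \<noteq> {}} \<le> card b"
  proof (rule card_le_card_if_disjoint_meets)
    show "finite b"
      using card_b by (simp add: card_ge_0_finite)
    have "matching {c \<in> C. c \<inter> b \<noteq> {}}"
      by (rule matching_subset[OF matching(3)]) blast
    then show "disjoint {c \<in> C. c \<inter> b \<noteq> {}}"
      by (simp add: matching_def)
  qed simp
  then have "{c \<in> C. c \<inter> b \<noteq> {}} \<noteq> C"
    using card_b card_lower(3) by fastforce
  then obtain c where "c \<in> C" "b \<inter> c = {}"
    by blast
  then show ?thesis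
    using subset_Union_avoiding[OF _ assms] by blast
qed

lemma C_subset_Union_A:
  assumes "c \<in> C"
  shows "c \<subseteq> \<Union>A"
proof -
  obtain a a' where aa': "{a \<in> A. a \<inter> c \<noteq> {}} = {a, a'}" "a \<noteq> a'"
    using card_avoiding_meeting(2)[OF assms] by (meson card_2_iff)
  have "a \<in> {a \<in> A. a \<inter> c \<noteq> {}}" "a' \<in> {a \<in> A. a \<inter> c \<noteq> {}}"
    unfolding aa'(1) by simp_all
  then have a: "a \<in> A" "a' \<in> A" "c \<inter> a \<noteq> {}" "c \<inter> a' \<noteq> {}"
    by auto
  have "c \<subseteq> a \<union> a'"
    using subset_Un_if_meets_both[OF matching_card[OF matching(3) assms] a(3,4)]
      matching_disjoint[OF matching(1) a(1,2) aa'(2)] .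
  then show ?thesis
    using a(1,2) by blast
qed

lemma subset_Union_meeting:
  assumes "c \<in> C" "b \<in> B" "b \<inter> c \<noteq> {}"
  shows "b \<subseteq> \<Union>{a \<in> A. a \<inter> c \<noteq> {}}"
proof
  fix u assume "u \<in> b"
  then obtain a where a: "a \<in> A" "u \<in> a"
    using B_subset_Union_A[OF assms(2)] by blast
  have "a \<inter> c \<noteq> {}"
  proof
    assume "a \<inter> c = {}"
    then obtain b' where b': "b' \<in> B" "b' \<inter> c = {}" "u \<in> b'"
      using rainbow_free_matchings.subset_Union_avoiding[OF swap assms(1) a(1)] a(2) by blast
    then have "b \<noteq> b'"
      using assms(3) by blast
    then show False
      using matching_disjoint[OF matching(2) assms(2) b'(1)] \<open>u \<in> b\<close> b'(3) by blast
  qed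
  then show "u \<in> \<Union>{a \<in> A. a \<inter> c \<noteq> {}}"
    using a by blast
qed

lemma meeting_pairs_meet:
  assumes "c \<in> C" "a \<in> A" "b \<in> B" "a \<inter> c \<noteq> {}" "b \<inter> c \<noteq> {}"
  shows "a \<inter> b \<noteq> {}"
proof -
  have "a \<in> {a \<in> A. a \<inter> c \<noteq> {}}"
    using assms(2,4) by simp
  then obtain a' where a': "{a \<in> A. a \<inter> c \<noteq> {}} = {a, a'}" "a \<noteq> a'"
    by (rule card_2_obtain[OF card_avoiding_meeting(2)[OF assms(1)]])
  have "a' \<in> {a \<in> A. a \<inter> c \<noteq> {}}"
    unfolding a'(1) by simp
  then have "a' \<in> A"
    by simp
  have "b \<inter> a \<noteq> {}"
  proof (rule meets_both_if_subset_Un)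
    show "card b = 2" "card a = 2" "card a' = 2"
      using matching_card[OF matching(2) assms(3)] matching_card[OF matching(1) assms(2)]
        matching_card[OF matching(1) \<open>a' \<in> A\<close>] .
    show "b \<subseteq> a \<union> a'"
      using subset_Union_meeting[OF assms(1,3,5)] unfolding a'(1) by simp
    show "b \<noteq> a" "b \<noteq> a'"
      using disjoint_families(1) assms(2,3) \<open>a' \<in> A\<close> by auto
  qed
  then show ?thesis
    by (simp add: Int_commute)
qed

lemma two_blocks:
  obtains a1 a2 a3 a4 b1 b2 b3 b4 where
    "A = {a1, a2, a3, a4}" "distinct [a1, a2, a3, a4]"
    "B = {b1, b2, b3, b4}" "distinct [b1, b2, b3, b4]"
    "a1 \<inter> b1 \<noteq> {}" "a1 \<inter> b2 \<noteq> {}" "a2 \<inter> b1 \<noteq> {}" "a2 \<inter> b2 \<noteq> {}"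
    "a3 \<inter> b3 \<noteq> {}" "a3 \<inter> b4 \<noteq> {}" "a4 \<inter> b3 \<noteq> {}" "a4 \<inter> b4 \<noteq> {}"
proof -
  obtain c where c: "c \<in> C"
    using card_lower(3) by fastforce
  obtain a1 a2 where a12: "{a \<in> A. a \<inter> c = {}} = {a1, a2}" "a1 \<noteq> a2"
    using card_avoiding_meeting(1)[OF c] by (meson card_2_iff)
  obtain a3 a4 where a34: "{a \<in> A. a \<inter> c \<noteq> {}} = {a3, a4}" "a3 \<noteq> a4"
    using card_avoiding_meeting(2)[OF c] by (meson card_2_iff)
  obtain b1 b2 where b12: "{b \<in> B. b \<inter> c = {}} = {b1, b2}" "b1 \<noteq> b2"
    using rainbow_free_matchings.card_avoiding_meeting(1)[OF swap c] by (meson card_2_iff)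
  obtain b3 b4 where b34: "{b \<in> B. b \<inter> c \<noteq> {}} = {b3, b4}" "b3 \<noteq> b4"
    using rainbow_free_matchings.card_avoiding_meeting(2)[OF swap c] by (meson card_2_iff)
  have "a1 \<in> {a \<in> A. a \<inter> c = {}}" "a2 \<in> {a \<in> A. a \<inter> c = {}}"
    "a3 \<in> {a \<in> A. a \<inter> c \<noteq> {}}" "a4 \<in> {a \<in> A. a \<inter> c \<noteq> {}}"
    "b1 \<in> {b \<in> B. b \<inter> c = {}}" "b2 \<in> {b \<in> B. b \<inter> c = {}}"
    "b3 \<in> {b \<in> B. b \<inter> c \<noteq> {}}" "b4 \<in> {b \<in> B. b \<inter> c \<noteq> {}}"
    unfolding a12(1) a34(1) b12(1) b34(1) by simp_all
  then have mem: "a1 \<in> A" "a2 \<in> A" "a3 \<in> A" "a4 \<in> A" "b1 \<in> B" "b2 \<in> B" "b3 \<in> B" "b4 \<in> B"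
    and avoid: "a1 \<inter> c = {}" "a2 \<inter> c = {}" "b1 \<inter> c = {}" "b2 \<inter> c = {}"
    and meet: "a3 \<inter> c \<noteq> {}" "a4 \<inter> c \<noteq> {}" "b3 \<inter> c \<noteq> {}" "b4 \<inter> c \<noteq> {}"
    by simp_all
  show ?thesis
  proof (rule that)
    have "A = {a \<in> A. a \<inter> c = {}} \<union> {a \<in> A. a \<inter> c \<noteq> {}}"
      "B = {b \<in> B. b \<inter> c = {}} \<union> {b \<in> B. b \<inter> c \<noteq> {}}"
      by blast+
    then show "A = {a1, a2, a3, a4}" "B = {b1, b2, b3, b4}"
      unfolding a12(1) a34(1) b12(1) b34(1) by auto
    show "distinct [a1, a2, a3, a4]" "distinct [b1, b2, b3, b4]"
      using a12(2) a34(2) b12(2) b34(2) avoid meet by auto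
    show "a1 \<inter> b1 \<noteq> {}" "a1 \<inter> b2 \<noteq> {}" "a2 \<inter> b1 \<noteq> {}" "a2 \<inter> b2 \<noteq> {}"
      using rainbow_free[OF _ _ c] mem avoid by blast+
    show "a3 \<inter> b3 \<noteq> {}" "a3 \<inter> b4 \<noteq> {}" "a4 \<inter> b3 \<noteq> {}" "a4 \<inter> b4 \<noteq> {}"
      using meeting_pairs_meet[OF c] mem meet by blast+
  qed
qed

lemma grid_of_two_blocks:
  obtains p q r s p' q' r' s' where "distinct [p, q, r, s, p', q', r', s']"
    "A = {{p, q}, {r, s}, {p', q'}, {r', s'}}" "B = {{p, r}, {q, s}, {p', r'}, {q', s'}}"
proof -
  obtain a1 a2 a3 a4 b1 b2 b3 b4 where A: "A = {a1, a2, a3, a4}" "distinct [a1, a2, a3, a4]"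
    and B: "B = {b1, b2, b3, b4}" "distinct [b1, b2, b3, b4]"
    and block1: "a1 \<inter> b1 \<noteq> {}" "a1 \<inter> b2 \<noteq> {}" "a2 \<inter> b1 \<noteq> {}" "a2 \<inter> b2 \<noteq> {}"
    and block2: "a3 \<inter> b3 \<noteq> {}" "a3 \<inter> b4 \<noteq> {}" "a4 \<inter> b3 \<noteq> {}" "a4 \<inter> b4 \<noteq> {}"
    by (rule two_blocks)
  have sub: "{a1, a2} \<subseteq> A" "{a3, a4} \<subseteq> A" "{b1, b2} \<subseteq> B" "{b3, b4} \<subseteq> B"
    using A(1) B(1) by simp_all
  note matchings = matching_subset[OF matching(1) sub(1)] matching_subset[OF matching(1) sub(2)]
    matching_subset[OF matching(2) sub(3)] matching_subset[OF matching(2) sub(4)]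
  have ne: "a1 \<noteq> a2" "a3 \<noteq> a4" "b1 \<noteq> b2" "b3 \<noteq> b4"
    using A(2) B(2) by simp_all
  obtain p q r s where pqrs: "distinct [p, q, r, s]"
    "a1 = {p, q}" "a2 = {r, s}" "b1 = {p, r}" "b2 = {q, s}"
    by (rule two_by_two_grid[OF matchings(1,3) ne(1,3) block1])
  obtain p' q' r' s' where pqrs': "distinct [p', q', r', s']"
    "a3 = {p', q'}" "a4 = {r', s'}" "b3 = {p', r'}" "b4 = {q', s'}"
    by (rule two_by_two_grid[OF matchings(2,4) ne(2,4) block2])
  have "a \<inter> a' = {}" if "a \<in> {a1, a2}" "a' \<in> {a3, a4}" for a a'
  proof (rule matching_disjoint[OF matching(1)])
    show "a \<in> A" "a' \<in> A" "a \<noteq> a'"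
      using that A by auto
  qed
  then have "(a1 \<union> a2) \<inter> (a3 \<union> a4) = {}"
    by blast
  then have "set [p, q, r, s] \<inter> set [p', q', r', s'] = {}"
    using pqrs(2,3) pqrs'(2,3) by simp
  then have "distinct ([p, q, r, s] @ [p', q', r', s'])"
    using pqrs(1) pqrs'(1) by (simp only: distinct_append)
  then show ?thesis
    using that[of p q r s p' q' r' s'] pqrs pqrs' A(1) B(1) by simp
qed

lemma diagonal_in_block:
  assumes "distinct [p, q, r, s]" "u \<in> {p, q, r, s}" "v \<in> {p, q, r, s}" "u \<noteq> v"
    "{u, v} \<notin> {{p, q}, {r, s}, {p, r}, {q, s}}"
  shows "{u, v} \<in> {{p, s}, {q, r}}"
  using assms by (auto simp: doubleton_eq_iff)

lemma C_within_blocks: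
  assumes distinct: "distinct [p, q, r, s, p', q', r', s']"
    and A: "A = {{p, q}, {r, s}, {p', q'}, {r', s'}}"
    and B: "B = {{p, r}, {q, s}, {p', r'}, {q', s'}}"
    and c: "c \<in> C" "c = {u, v}" and u: "u \<in> {p, q, r, s}" and v: "v \<in> {p', q', r', s'}"
  shows False
proof -
  obtain a where a: "a \<in> {{p, q}, {r, s}}" "u \<notin> a"
    using u distinct by auto
  obtain b where b: "b \<in> {{p', r'}, {q', s'}}" "v \<notin> b"
    using v distinct by auto
  have "a \<inter> b = {}" "a \<inter> c = {}" "b \<inter> c = {}"
    using a b u v c(2) distinct by auto
  then show False
    using rainbow_free[OF _ _ c(1)] a(1) b(1) A B by blast
qed

lemma C_subset_diagonals:
  assumes distinct: "distinct [p, q, r, s, p', q', r', s']"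
    and A: "A = {{p, q}, {r, s}, {p', q'}, {r', s'}}"
    and B: "B = {{p, r}, {q, s}, {p', r'}, {q', s'}}"
  shows "C \<subseteq> {{p, s}, {q, r}, {p', s'}, {q', r'}}"
proof
  fix c assume c: "c \<in> C"
  obtain u v where uv: "c = {u, v}" "u \<noteq> v"
    using matching_card[OF matching(3) c] by (meson card_2_iff)
  have "c \<subseteq> {p, q, r, s} \<union> {p', q', r', s'}"
    using C_subset_Union_A[OF c] A by auto
  then have W: "u \<in> {p, q, r, s} \<union> {p', q', r', s'}" "v \<in> {p, q, r, s} \<union> {p', q', r', s'}"
    using uv(1) by auto
  have not_AB: "c \<notin> A" "c \<notin> B"
    using c disjoint_families(2,3) by blast+
  have "c = {v, u}"
    using uv(1) by blast
  then consider "u \<in> {p, q, r, s}" "v \<in> {p, q, r, s}" | "u \<in> {p', q', r', s'}" "v \<in> {p', q', r', s'}"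
    using W C_within_blocks[OF assms c] uv(1) by blast
  then show "c \<in> {{p, s}, {q, r}, {p', s'}, {q', r'}}"
  proof cases
    case 1
    then have "{u, v} \<in> {{p, s}, {q, r}}"
      using diagonal_in_block[of p q r s u v] distinct uv not_AB A B by auto
    then show ?thesis
      using uv(1) by blast
  next
    case 2
    then have "{u, v} \<in> {{p', s'}, {q', r'}}"
      using diagonal_in_block[of p' q' r' s' u v] distinct uv not_AB A B by auto
    then show ?thesis
      using uv(1) by blast
  qed
qed

end

section \<open>Linear 3-graphs\<close>

lemma linear_3graph_card_edge:
  "linear_3graph V E \<Longrightarrow> f \<in> E \<Longrightarrow> card f = 3"
  by (simp add: linear_3graph_def)

lemma linear_3graph_finite_edges:
  "linear_3graph V E \<Longrightarrow> finite E"
  unfolding linear_3graph_def by (meson Pow_iff finite_Pow_iff rev_finite_subset subsetI)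

lemma linear_3graph_edges_eq:
  assumes "linear_3graph V E" "f \<in> E" "g \<in> E" "{u, v} \<subseteq> f" "{u, v} \<subseteq> g" "u \<noteq> v"
  shows "f = g"
proof (rule ccontr)
  assume "f \<noteq> g"
  then have "card (f \<inter> g) \<le> 1"
    using assms(1-3) by (simp add: linear_3graph_def)
  moreover have "finite (f \<inter> g)"
    using linear_3graph_card_edge[OF assms(1,2)] by (simp add: card_ge_0_finite)
  moreover have "{u, v} \<subseteq> f \<inter> g"
    using assms(4,5) by simp
  ultimately have "card {u, v} \<le> 1"
    by (meson card_mono order_trans)
  then show False
    using assms(6) by simp
qed

lemma linear_3graph_edge_through:
  assumes "linear_3graph V E" "f \<in> E" "v \<in> f"
  obtains a b where "f = {v, a, b}" "distinct [v, a, b]"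
proof -
  have "card (f - {v}) = 2"
    using linear_3graph_card_edge[OF assms(1,2)] assms(3) by simp
  then obtain a b where "f - {v} = {a, b}" "a \<noteq> b"
    by (meson card_2_iff)
  then have "f = {v, a, b}" "a \<noteq> v" "b \<noteq> v"
    using assms(3) by blast+
  then show ?thesis
    using that \<open>a \<noteq> b\<close> by simp
qed

lemma linear_3graph_edge_through_two:
  assumes "linear_3graph V E" "f \<in> E" "u \<in> f" "v \<in> f" "u \<noteq> v"
  obtains t where "f = {u, v, t}" "distinct [u, v, t]"
proof -
  have "card (f - {u, v}) = 1"
    using linear_3graph_card_edge[OF assms(1,2)] assms(3-5) by (simp add: card_Diff_subset)
  then obtain t where "f - {u, v} = {t}"
    by (meson card_1_singletonE)
  then have "f = {u, v, t}" "t \<noteq> u" "t \<noteq> v"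
    using assms(3,4) by blast+
  then show ?thesis
    using that assms(5) by simp
qed

lemma degree_le_card_if_edges_meet:
  assumes "linear_3graph V E" "finite e" "w \<notin> e"
    and "\<And>f. f \<in> E \<Longrightarrow> w \<in> f \<Longrightarrow> f \<inter> e \<noteq> {}"
  shows "degree E w \<le> card e"
  unfolding degree_def
proof (rule card_le_if_inj_on_rel[where r = "\<lambda>f u. u \<in> f"])
  show "\<exists>u. u \<in> e \<and> u \<in> f" if "f \<in> {f \<in> E. w \<in> f}" for f
    using assms(4) that by blast
  show "f = g" if "f \<in> {f \<in> E. w \<in> f}" "g \<in> {f \<in> E. w \<in> f}" "u \<in> e" "u \<in> f" "u \<in> g" for f g u
    using linear_3graph_edges_eq[OF assms(1), of f g w u] that assms(3) by auto
qed (rule assms(2))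

lemma crown_freeD:
  assumes "crown_free E" "{a, b, c} \<in> E" "{a, d, e} \<in> E" "{b, f, g} \<in> E" "{c, h, i} \<in> E"
    and "distinct [a, b, c, d, e, f, g, h, i]"
  shows False
  using assms unfolding crown_free_def contains_crown_def by blast

section \<open>Petals of an edge in a crown-free linear 3-graph\<close>

locale crown_free_edge =
  fixes V :: "'a set" and E :: "'a set set" and x y z :: 'a
  assumes linear: "linear_3graph V E" and no_crown: "crown_free E" and edge: "{x, y, z} \<in> E"
begin

lemma distinct_xyz: "distinct [x, y, z]"
  using linear_3graph_card_edge[OF linear edge] by (auto simp: card_insert_if split: if_splits)

definition petals :: "'a \<Rightarrow> 'a set set" where
  "petals v = (\<lambda>f. f - {v}) ` {f \<in> E. v \<in> f \<and> f \<noteq> {x, y, z}}"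

lemma petals_iff: "a \<in> petals v \<longleftrightarrow> insert v a \<in> E \<and> v \<notin> a \<and> insert v a \<noteq> {x, y, z}"
proof
  assume "a \<in> petals v"
  then obtain f where "f \<in> E" "v \<in> f" "f \<noteq> {x, y, z}" "a = f - {v}"
    unfolding petals_def by blast
  then show "insert v a \<in> E \<and> v \<notin> a \<and> insert v a \<noteq> {x, y, z}"
    by (simp add: insert_absorb)
next
  assume "insert v a \<in> E \<and> v \<notin> a \<and> insert v a \<noteq> {x, y, z}"
  moreover have "a = insert v a - {v}" if "v \<notin> a"
    using that by simp
  ultimately show "a \<in> petals v"
    unfolding petals_def by blast
qed

lemma card_petal:
  assumes "a \<in> petals v"
  shows "card a = 2"
proof -
  have "card (insert v a) = 3" "v \<notin> a"
    using assms linear_3graph_card_edge[OF linear] by (auto simp: petals_iff)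
  then show ?thesis
    by (cases "finite a") simp_all
qed

lemma petal_avoids_edge:
  assumes "v \<in> {x, y, z}" "a \<in> petals v"
  shows "a \<inter> {x, y, z} = {}"
proof (rule ccontr)
  assume "a \<inter> {x, y, z} \<noteq> {}"
  then obtain u where "u \<in> a" "u \<in> {x, y, z}"
    by blast
  then have "insert v a = {x, y, z}"
    using linear_3graph_edges_eq[OF linear _ edge, of "insert v a" u v] assms petals_iff by auto
  then show False
    using assms(2) petals_iff by blast
qed

lemma matching_petals: "matching (petals v)"
  unfolding matching_def
proof (intro conjI disjointI ballI)
  show "a \<inter> a' = {}" if "a \<in> petals v" "a' \<in> petals v" "a \<noteq> a'" for a a'
  proof (rule ccontr)
    assume "a \<inter> a' \<noteq> {}"
    then obtain u where "u \<in> a" "u \<in> a'"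
      by blast
    then have "insert v a = insert v a'"
      using linear_3graph_edges_eq[OF linear, of "insert v a" "insert v a'" u v] that(1,2)
      by (auto simp: petals_iff)
    then show False
      using that by (metis Diff_insert_absorb petals_iff)
  qed
qed (rule card_petal)

lemma petals_disjoint:
  assumes "v \<noteq> w"
  shows "petals v \<inter> petals w = {}"
proof (rule ccontr)
  assume "petals v \<inter> petals w \<noteq> {}"
  then obtain a where a: "a \<in> petals v" "a \<in> petals w"
    by blast
  then obtain u u' where "a = {u, u'}" "u \<noteq> u'"
    using card_petal by (meson card_2_iff)
  then have "insert v a = insert w a"
    using linear_3graph_edges_eq[OF linear, of "insert v a" "insert w a" u u'] a
    by (auto simp: petals_iff)
  then show False
    using a assms by (auto simp: petals_iff)
qed

lemma card_petals:
  assumes "v \<in> {x, y, z}"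
  shows "card (petals v) = degree E v - 1"
proof -
  have "petals v = (\<lambda>f. f - {v}) ` ({f \<in> E. v \<in> f} - {{x, y, z}})"
    unfolding petals_def by (rule arg_cong[where f = "image _"]) blast
  moreover have "inj_on (\<lambda>f. f - {v}) ({f \<in> E. v \<in> f} - {{x, y, z}})"
    by (rule inj_onI) (metis (no_types, lifting) DiffD1 insert_Diff mem_Collect_eq)
  ultimately have "card (petals v) = card ({f \<in> E. v \<in> f} - {{x, y, z}})"
    by (simp add: card_image)
  also have "\<dots> = degree E v - 1"
    using linear_3graph_finite_edges[OF linear] edge assms by (simp add: degree_def)
  finally show ?thesis .
qed

lemma petals_rainbow_free:
  assumes "a \<in> petals x" "b \<in> petals y" "c \<in> petals z"
    and "a \<inter> b = {}" "a \<inter> c = {}" "b \<inter> c = {}"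
  shows False
proof -
  obtain a1 a2 where a: "a = {a1, a2}" "a1 \<noteq> a2"
    using card_petal[OF assms(1)] by (meson card_2_iff)
  obtain b1 b2 where b: "b = {b1, b2}" "b1 \<noteq> b2"
    using card_petal[OF assms(2)] by (meson card_2_iff)
  obtain c1 c2 where c: "c = {c1, c2}" "c1 \<noteq> c2"
    using card_petal[OF assms(3)] by (meson card_2_iff)
  have "distinct [x, y, z, a1, a2, b1, b2, c1, c2]"
    using a b c assms(4-6) distinct_xyz
      petal_avoids_edge[OF _ assms(1)] petal_avoids_edge[OF _ assms(2)] petal_avoids_edge[OF _ assms(3)]
    by auto
  moreover have "{x, a1, a2} \<in> E" "{y, b1, b2} \<in> E" "{z, c1, c2} \<in> E"
    using assms(1-3) a(1) b(1) c(1) by (simp_all add: petals_iff)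
  ultimately show False
    using crown_freeD[OF no_crown edge] by blast
qed

definition petal_grid :: "'a \<Rightarrow> 'a \<Rightarrow> 'a \<Rightarrow> 'a \<Rightarrow> 'a \<Rightarrow> 'a \<Rightarrow> 'a \<Rightarrow> 'a \<Rightarrow> bool" where
  "petal_grid p q r s p' q' r' s' \<longleftrightarrow> distinct [x, y, z, p, q, r, s, p', q', r', s'] \<and>
     petals x = {{p, q}, {r, s}, {p', q'}, {r', s'}} \<and>
     petals y = {{p, r}, {q, s}, {p', r'}, {q', s'}} \<and>
     petals z \<subseteq> {{p, s}, {q, r}, {p', s'}, {q', r'}} \<and> 3 \<le> card (petals z)"

lemma petal_grid_exists:
  assumes "5 \<le> degree E x" "5 \<le> degree E y" "4 \<le> degree E z"
  obtains p q r s p' q' r' s' where "petal_grid p q r s p' q' r' s'"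
proof -
  interpret rainbow_free_matchings "petals x" "petals y" "petals z"
  proof
    show "matching (petals x)" "matching (petals y)" "matching (petals z)"
      by (rule matching_petals)+
    show "petals x \<inter> petals y = {}" "petals x \<inter> petals z = {}" "petals y \<inter> petals z = {}"
      using petals_disjoint distinct_xyz by simp_all
    show "4 \<le> card (petals x)" "4 \<le> card (petals y)" "3 \<le> card (petals z)"
      using assms card_petals by simp_all
  qed (rule petals_rainbow_free)
  obtain p q r s p' q' r' s' where D: "distinct [p, q, r, s, p', q', r', s']"
    and X: "petals x = {{p, q}, {r, s}, {p', q'}, {r', s'}}"
    and Y: "petals y = {{p, r}, {q, s}, {p', r'}, {q', s'}}"
    by (rule grid_of_two_blocks)
  have "{p, q, r, s, p', q', r', s'} = \<Union>(petals x)"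
    using X by auto
  then have "set [x, y, z] \<inter> set [p, q, r, s, p', q', r', s'] = {}"
    using petal_avoids_edge[of x] by auto
  then have "distinct ([x, y, z] @ [p, q, r, s, p', q', r', s'])"
    using distinct_xyz D by (simp only: distinct_append)
  then have "petal_grid p q r s p' q' r' s'"
    unfolding petal_grid_def using X Y C_subset_diagonals[OF D X Y] card_lower(3) by simp
  then show ?thesis
    by (rule that)
qed

lemma petal_grid_distinct:
  "petal_grid p q r s p' q' r' s' \<Longrightarrow> distinct [x, y, z, p, q, r, s, p', q', r', s']"
  by (simp add: petal_grid_def)

lemma petal_grid_edges:
  assumes "petal_grid p q r s p' q' r' s'"
  shows "{x, p, q} \<in> E" "{x, r, s} \<in> E" "{x, p', q'} \<in> E" "{x, r', s'} \<in> E"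
    "{y, p, r} \<in> E" "{y, q, s} \<in> E" "{y, p', r'} \<in> E" "{y, q', s'} \<in> E"
proof -
  have "{{p, q}, {r, s}, {p', q'}, {r', s'}} \<subseteq> petals x"
    "{{p, r}, {q, s}, {p', r'}, {q', s'}} \<subseteq> petals y"
    using assms by (simp_all add: petal_grid_def)
  then show "{x, p, q} \<in> E" "{x, r, s} \<in> E" "{x, p', q'} \<in> E" "{x, r', s'} \<in> E"
    "{y, p, r} \<in> E" "{y, q, s} \<in> E" "{y, p', r'} \<in> E" "{y, q', s'} \<in> E"
    by (simp_all add: petals_iff)
qed

lemma petal_grid_diagonal_edges:
  assumes G: "petal_grid p q r s p' q' r' s'"
    and d: "d \<in> {{p, s}, {q, r}, {p', s'}, {q', r'}}" "d' \<in> {{p, s}, {q, r}, {p', s'}, {q', r'}}"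
    and "d \<noteq> d'" "insert z d \<notin> E"
  shows "insert z d' \<in> E"
proof -
  let ?D = "{{p, s}, {q, r}, {p', s'}, {q', r'}}"
  have sub: "petals z \<subseteq> ?D" and three: "3 \<le> card (petals z)"
    using G by (simp_all add: petal_grid_def)
  have "d \<notin> petals z"
    using assms(5) by (simp add: petals_iff)
  then have "petals z \<subseteq> ?D - {d}"
    using sub by blast
  moreover have "card (?D - {d}) \<le> 3"
  proof -
    have "card ?D \<le> 4"
      using card_length[of "[{p, s}, {q, r}, {p', s'}, {q', r'}]"] by simp
    moreover have "card (?D - {d}) = card ?D - 1"
      using d(1) by (intro card_Diff_singleton) simp_all
    ultimately show ?thesis
      by linarith
  qed
  ultimately have "petals z = ?D - {d}"
    using three by (intro card_seteq) auto
  then have "d' \<in> petals z"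
    using d(2) assms(4) by blast
  then show ?thesis
    by (simp add: petals_iff)
qed

lemma petal_grid_relabel:
  assumes "petal_grid p q r s p' q' r' s'"
    and "distinct [x, y, z, a, b, c, d, a', b', c', d']"
    and "{{a, b}, {c, d}, {a', b'}, {c', d'}} = {{p, q}, {r, s}, {p', q'}, {r', s'}}"
    and "{{a, c}, {b, d}, {a', c'}, {b', d'}} = {{p, r}, {q, s}, {p', r'}, {q', s'}}"
    and "{{a, d}, {b, c}, {a', d'}, {b', c'}} = {{p, s}, {q, r}, {p', s'}, {q', r'}}"
  shows "petal_grid a b c d a' b' c' d'"
  using assms(1) unfolding petal_grid_def assms(3-5)
  by (elim conjE) (intro conjI assms(2))

lemma petal_grid_swap_in_x_petals:
  assumes "petal_grid p q r s p' q' r' s'"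
  shows "petal_grid q p s r p' q' r' s'"
proof (rule petal_grid_relabel[OF assms])
  show "distinct [x, y, z, q, p, s, r, p', q', r', s']"
    using petal_grid_distinct[OF assms] by auto
qed (simp_all add: insert_commute)

lemma petal_grid_swap_in_y_petals:
  assumes "petal_grid p q r s p' q' r' s'"
  shows "petal_grid r s p q p' q' r' s'"
proof (rule petal_grid_relabel[OF assms])
  show "distinct [x, y, z, r, s, p, q, p', q', r', s']"
    using petal_grid_distinct[OF assms] by auto
qed (simp_all add: insert_commute)

lemma petal_grid_swap_blocks:
  assumes "petal_grid p q r s p' q' r' s'"
  shows "petal_grid p' q' r' s' p q r s"
proof (rule petal_grid_relabel[OF assms])
  show "distinct [x, y, z, p', q', r', s', p, q, r, s]"
    using petal_grid_distinct[OF assms] by auto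
qed (simp_all add: insert_commute)

(* The three relabellings above generate a group acting transitively on the eight grid
   vertices, so outer edges only have to be excluded through p. *)
lemma petal_grid_relabel_first:
  assumes G: "petal_grid p q r s p' q' r' s'" and w: "w \<in> {p, q, r, s, p', q', r', s'}"
  obtains a b c a' b' c' d' where "petal_grid w a b c a' b' c' d'"
proof -
  note swap_x = petal_grid_swap_in_x_petals and swap_y = petal_grid_swap_in_y_petals
    and swap_blocks = petal_grid_swap_blocks
  from w consider "w = p" | "w = q" | "w = r" | "w = s" | "w = p'" | "w = q'" | "w = r'" | "w = s'"
    by blast
  then show thesis
  proof cases
    case 1
    then show thesis using that G by blast
  next
    case 2
    then show thesis using that swap_x[OF G] by blast
  next
    case 3
    then show thesis using that swap_y[OF G] by blast
  next
    case 4
    then show thesis using that swap_y[OF swap_x[OF G]] by blast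
  next
    case 5
    then show thesis using that swap_blocks[OF G] by blast
  next
    case 6
    then show thesis using that swap_x[OF swap_blocks[OF G]] by blast
  next
    case 7
    then show thesis using that swap_y[OF swap_blocks[OF G]] by blast
  next
    case 8
    then show thesis using that swap_y[OF swap_x[OF swap_blocks[OF G]]] by blast
  qed
qed

lemma petal_grid_no_outer_edge_through_p_s:
  assumes G: "petal_grid p q r s p' q' r' s'"
    and f: "f \<in> E" "f \<inter> {x, y, z} = {}" "p \<in> f" "s \<in> f"
  shows False
proof -
  have dist: "distinct [x, y, z, p, q, r, s, p', q', r', s']"
    by (rule petal_grid_distinct[OF G])
  note edges = petal_grid_edges[OF G]
  obtain t where ft: "f = {p, s, t}" "distinct [p, s, t]"
    using linear_3graph_edge_through_two[OF linear f(1,3,4)] dist by auto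
  have shares_two: "g = f" if "g \<in> E" "{a, b} \<subseteq> g" "{a, b} \<subseteq> f" "a \<noteq> b" for g a b
    using linear_3graph_edges_eq[OF linear that(1) f(1) that(2,3,4)] .
  have "{z, p, s} \<notin> E"
    using shares_two[of "{z, p, s}" p s] f(2-4) dist by auto
  then have zqr: "{q, z, r} \<in> E"
    using petal_grid_diagonal_edges[OF G, of "{p, s}" "{q, r}"] dist
    by (auto simp: doubleton_eq_iff insert_commute)
  have "t \<noteq> q" "t \<noteq> r"
    using shares_two[OF edges(1), of p q] shares_two[OF edges(5), of p r] ft f(2) dist by auto
  then have t: "t \<notin> {x, y, z, q, r}"
    using ft(1) f(2) by auto
  consider "t \<notin> {p', q'}" | "t \<notin> {r', s'}"
    using dist by auto
  then show False
  proof cases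
    case 1
    then show False
      using crown_freeD[OF no_crown edges(1) edges(3) _ zqr, of s t] f(1) ft t dist by auto
  next
    case 2
    then show False
      using crown_freeD[OF no_crown edges(1) edges(4) _ zqr, of s t] f(1) ft t dist by auto
  qed
qed

lemma petal_grid_no_outer_edge_across_blocks:
  assumes G: "petal_grid p q r s p' q' r' s'"
    and f: "{p, u, v} \<in> E" "{p, u, v} \<inter> {x, y, z} = {}"
    and uv: "u \<in> {p', q'}" "v \<in> {r', s'}"
  shows False
proof -
  have dist: "distinct [x, y, z, p, q, r, s, p', q', r', s']"
    by (rule petal_grid_distinct[OF G])
  note edges = petal_grid_edges[OF G]
  have "u \<noteq> v"
    using uv dist by auto
  then have shares_uv: "w \<in> {p, u, v}" if "{w, u, v} \<in> E" for w
    using linear_3graph_edges_eq[OF linear that f(1), of u v] by blast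
  have "y \<notin> {p, u, v}" "z \<notin> {p, u, v}"
    using f(2) by auto
  then have no_yuv: "{y, u, v} \<notin> E" and no_zuv: "insert z {u, v} \<notin> E"
    using shares_uv by blast+
  then have "{u, v} \<noteq> {p', r'}" "{u, v} \<noteq> {q', s'}"
    using edges(7,8) by auto
  then consider "u = p'" "v = s'" | "u = q'" "v = r'"
    using uv by auto
  then obtain a b where ab: "{a, b, u, v} = {p', q', r', s'}" "distinct [a, b, u, v]"
    and diagonals: "{a, b} \<in> {{p', s'}, {q', r'}}" "{u, v} \<in> {{p', s'}, {q', r'}}"
  proof cases
    case 1
    then show thesis
      using that[of q' r'] dist by auto
  next
    case 2
    then show thesis
      using that[of p' s'] dist by auto
  qed
  have in_D: "{u, v} \<in> {{p, s}, {q, r}, {p', s'}, {q', r'}}" "{a, b} \<in> {{p, s}, {q, r}, {p', s'}, {q', r'}}"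
    "{p, s} \<in> {{p, s}, {q, r}, {p', s'}, {q', r'}}"
    using diagonals by blast+
  have "a \<notin> {u, v}" "p \<notin> {u, v}"
    using ab(2) uv dist by auto
  then have "{u, v} \<noteq> {a, b}" "{u, v} \<noteq> {p, s}"
    by blast+
  then have zab: "{z, a, b} \<in> E" and zps: "{z, p, s} \<in> E"
    using petal_grid_diagonal_edges[OF G in_D(1) in_D(2)] petal_grid_diagonal_edges[OF G in_D(1) in_D(3)]
      no_zuv by blast+
  have sxr: "{s, x, r} \<in> E"
    using edges(2) by (simp add: insert_commute)
  have "{a, b, u, v} \<inter> {x, y, z, p, q, r, s} = {}"
    unfolding ab(1) using dist by auto
  then have "distinct [z, p, s, a, b, u, v, x, r]"
    using ab(2) dist by auto
  then show False
    by (rule crown_freeD[OF no_crown zps zab f(1) sxr])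
qed

lemma petal_grid_no_outer_edge_through_p:
  assumes G: "petal_grid p q r s p' q' r' s'"
    and f: "f \<in> E" "f \<inter> {x, y, z} = {}" "p \<in> f"
  shows False
proof (cases "s \<in> f")
  case True
  then show False
    using petal_grid_no_outer_edge_through_p_s[OF G f] by blast
next
  case False
  have dist: "distinct [x, y, z, p, q, r, s, p', q', r', s']"
    by (rule petal_grid_distinct[OF G])
  note edges = petal_grid_edges[OF G]
  have "q \<notin> f" "r \<notin> f"
    using linear_3graph_edges_eq[OF linear edges(1) f(1), of p q]
      linear_3graph_edges_eq[OF linear edges(5) f(1), of p r] f(2,3) dist by auto
  obtain t t' where ft: "f = {p, t, t'}" "distinct [p, t, t']"
    by (rule linear_3graph_edge_through[OF linear f(1,3)])
  have tt': "t \<notin> {x, y, z, q, r, s}" "t' \<notin> {x, y, z, q, r, s}"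
    using ft(1) f(2) False \<open>q \<notin> f\<close> \<open>r \<notin> f\<close> by auto
  have qys: "{q, y, s} \<in> E"
    using edges(6) by (simp add: insert_commute)
  have "f \<inter> {p', q'} \<noteq> {}"
  proof
    assume "f \<inter> {p', q'} = {}"
    then show False
      using crown_freeD[OF no_crown edges(1) edges(3) _ qys, of t t'] f(1) ft tt' dist by auto
  qed
  moreover have "f \<inter> {r', s'} \<noteq> {}"
  proof
    assume "f \<inter> {r', s'} = {}"
    then show False
      using crown_freeD[OF no_crown edges(1) edges(4) _ qys, of t t'] f(1) ft tt' dist by auto
  qed
  ultimately obtain u v where uv: "u \<in> {p', q'}" "v \<in> {r', s'}" "u \<in> f" "v \<in> f"
    by blast
  then have "f = {p, u, v}"
    using ft dist by auto
  then show False
    using petal_grid_no_outer_edge_across_blocks[OF G _ _ uv(1,2)] f(1,2) by simp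
qed

lemma petal_grid_edges_meet_edge:
  assumes G: "petal_grid p q r s p' q' r' s'"
    and f: "f \<in> E" "f \<inter> {p, q, r, s, p', q', r', s'} \<noteq> {}"
  shows "f \<inter> {x, y, z} \<noteq> {}"
proof
  assume outer: "f \<inter> {x, y, z} = {}"
  obtain w where w: "w \<in> f" "w \<in> {p, q, r, s, p', q', r', s'}"
    using f(2) by blast
  obtain a b c a' b' c' d' where "petal_grid w a b c a' b' c' d'"
    using petal_grid_relabel_first[OF G w(2)] .
  then show False
    using petal_grid_no_outer_edge_through_p f(1) outer w(1) by blast
qed

lemma finite_petals: "finite (petals v)"
  unfolding petals_def using linear_3graph_finite_edges[OF linear] by simp

lemma edges_meeting_edge:
  "{f \<in> E. f \<inter> {x, y, z} \<noteq> {}} = insert {x, y, z} (\<Union>v\<in>{x, y, z}. insert v ` petals v)"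
proof
  show "{f \<in> E. f \<inter> {x, y, z} \<noteq> {}} \<subseteq> insert {x, y, z} (\<Union>v\<in>{x, y, z}. insert v ` petals v)"
  proof
    fix f assume "f \<in> {f \<in> E. f \<inter> {x, y, z} \<noteq> {}}"
    then obtain v where f: "f \<in> E" "v \<in> f" "v \<in> {x, y, z}"
      by blast
    show "f \<in> insert {x, y, z} (\<Union>v\<in>{x, y, z}. insert v ` petals v)"
    proof (cases "f = {x, y, z}")
      case False
      then have "f - {v} \<in> petals v" "f = insert v (f - {v})"
        using f by (auto simp: petals_iff insert_absorb)
      then show ?thesis
        using f(3) by blast
    qed simp
  qed
  show "insert {x, y, z} (\<Union>v\<in>{x, y, z}. insert v ` petals v) \<subseteq> {f \<in> E. f \<inter> {x, y, z} \<noteq> {}}"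
    using edge by (auto simp: petals_iff)
qed

lemma card_edges_meeting_edge_le:
  assumes "\<And>v. v \<in> {x, y, z} \<Longrightarrow> card (petals v) \<le> k"
  shows "card {f \<in> E. f \<inter> {x, y, z} \<noteq> {}} \<le> 3 * k + 1"
proof -
  have "card (\<Union>v\<in>{x, y, z}. insert v ` petals v) \<le> (\<Sum>v\<in>{x, y, z}. card (insert v ` petals v))"
    by (rule card_UN_le) simp
  also have "\<dots> \<le> (\<Sum>v\<in>{x, y, z}. k)"
    using le_trans[OF card_image_le[OF finite_petals] assms] by (rule sum_mono)
  also have "\<dots> = 3 * k"
    using distinct_xyz by simp
  finally have "card (\<Union>v\<in>{x, y, z}. insert v ` petals v) \<le> 3 * k" .
  moreover have "finite (\<Union>v\<in>{x, y, z}. insert v ` petals v)"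
    using finite_petals by simp
  ultimately show ?thesis
    unfolding edges_meeting_edge by (simp add: card_insert_if)
qed

lemma Union_edges_meeting_edge:
  "\<Union>{f \<in> E. f \<inter> {x, y, z} \<noteq> {}} = {x, y, z} \<union> \<Union>(petals x \<union> petals y \<union> petals z)"
  unfolding edges_meeting_edge by auto

lemma degree_edge_vertex:
  assumes "v \<in> {x, y, z}"
  shows "degree E v = card (petals v) + 1"
proof -
  have "{f \<in> E. v \<in> f} \<noteq> {}" "finite {f \<in> E. v \<in> f}"
    using edge assms linear_3graph_finite_edges[OF linear] by auto
  then have "0 < degree E v"
    unfolding degree_def by (simp add: card_gt_0_iff)
  then show ?thesis
    using card_petals[OF assms] by simp
qed

lemma petal_grid_card_petals_le:
  assumes G: "petal_grid p q r s p' q' r' s'" and v: "v \<in> {x, y, z}"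
  shows "card (petals v) \<le> 4"
proof -
  have X: "petals x = {{p, q}, {r, s}, {p', q'}, {r', s'}}"
    and Y: "petals y = {{p, r}, {q, s}, {p', r'}, {q', s'}}"
    and Z: "petals z \<subseteq> {{p, s}, {q, r}, {p', s'}, {q', r'}}"
    using G by (simp_all add: petal_grid_def)
  have "card (petals z) \<le> card {{p, s}, {q, r}, {p', s'}, {q', r'}}"
    using Z by (intro card_mono) simp_all
  also have "\<dots> \<le> 4"
    using card_length[of "[{p, s}, {q, r}, {p', s'}, {q', r'}]"] by simp
  finally have "card (petals z) \<le> 4" .
  moreover have "card (petals x) \<le> 4"
    using card_length[of "[{p, q}, {r, s}, {p', q'}, {r', s'}]"] by (simp add: X)
  moreover have "card (petals y) \<le> 4"
    using card_length[of "[{p, r}, {q, s}, {p', r'}, {q', s'}]"] by (simp add: Y)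
  ultimately show ?thesis
    using v by blast
qed

lemma petal_grid_Union_edges_meeting_edge:
  assumes "petal_grid p q r s p' q' r' s'"
  shows "\<Union>{f \<in> E. f \<inter> {x, y, z} \<noteq> {}} = {x, y, z} \<union> {p, q, r, s, p', q', r', s'}"
proof -
  have "\<Union>(petals x) = {p, q, r, s, p', q', r', s'}" "\<Union>(petals y) = {p, q, r, s, p', q', r', s'}"
    "\<Union>(petals z) \<subseteq> {p, q, r, s, p', q', r', s'}"
    using assms unfolding petal_grid_def by auto
  then show ?thesis
    unfolding Union_edges_meeting_edge by auto
qed

theorem heavy_edge_component:
  assumes "5 \<le> degree E x" "5 \<le> degree E y" "4 \<le> degree E z"
  defines "S \<equiv> \<Union>{f \<in> E. f \<inter> {x, y, z} \<noteq> {}}"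
  defines "E_S \<equiv> {f \<in> E. f \<inter> S \<noteq> {}}"
  shows "card S = 11 \<and> (\<forall>v\<in>S. degree E v \<le> 5) \<and> card E_S \<le> 13 \<and> (\<forall>f\<in>E_S. f \<subseteq> S)"
proof -
  obtain p q r s p' q' r' s' where G: "petal_grid p q r s p' q' r' s'"
    using petal_grid_exists[OF assms(1-3)] .
  define W where "W = {p, q, r, s, p', q', r', s'}"
  have S: "S = {x, y, z} \<union> W"
    unfolding S_def W_def by (rule petal_grid_Union_edges_meeting_edge[OF G])
  have E_S: "E_S = {f \<in> E. f \<inter> {x, y, z} \<noteq> {}}"
    unfolding E_S_def S using petal_grid_edges_meet_edge[OF G] W_def by blast
  have "S = set [x, y, z, p, q, r, s, p', q', r', s']"
    unfolding S W_def by auto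
  then have "card S = 11"
    using distinct_card[OF petal_grid_distinct[OF G]] by simp
  moreover have "degree E v \<le> 5" if "v \<in> S" for v
  proof (cases "v \<in> {x, y, z}")
    case True
    then show ?thesis
      using degree_edge_vertex petal_grid_card_petals_le[OF G] by fastforce
  next
    case False
    then have "degree E v \<le> card {x, y, z}"
      using petal_grid_edges_meet_edge[OF G] that S W_def
      by (intro degree_le_card_if_edges_meet[OF linear]) auto
    then show ?thesis
      using card_length[of "[x, y, z]"] by simp
  qed
  moreover have "card E_S \<le> 13"
    unfolding E_S using card_edges_meeting_edge_le[of 4] petal_grid_card_petals_le[OF G] by simp
  moreover have "f \<subseteq> S" if "f \<in> E_S" for f
    using that unfolding E_S S_def by blast
  ultimately show ?thesis
    by blast
qed

end

theorem lemma2p1: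
  fixes V :: "'a set" and E :: "'a set set" and x y z :: 'a
  assumes "linear_3graph V E"
    and "crown_free E"
    and "{x, y, z} \<in> E"
    and "D_ge E {x, y, z} 5 5 4"
  defines "S \<equiv> \<Union> {f \<in> E. f \<inter> {x, y, z} \<noteq> {}}"
  defines "E_S \<equiv> {f \<in> E. f \<inter> S \<noteq> {}}"
  shows "card S = 11 \<and> (\<forall>v\<in>S. degree E v \<le> 5) \<and> card E_S \<le> 13 \<and> (\<forall>f\<in>E_S. f \<subseteq> S)"
proof -
  obtain u v w where uvw: "{x, y, z} = {u, v, w}"
    and degrees: "5 \<le> degree E u" "5 \<le> degree E v" "4 \<le> degree E w"
    using assms(4) unfolding D_ge_def by blast
  interpret crown_free_edge V E u v w
    using assms(1-3) uvw by unfold_locales simp_all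
  show ?thesis
    unfolding S_def E_S_def uvw by (rule heavy_edge_component[OF degrees])
qed

end
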